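(* Suppose $K\in C^2([-1,0])$ with $K_p>0$ is such that $h(q,p)=K(p)$ solves the height equation, and that $\mathscr S(K)=\mathscr S(H)$. Then $$\int_{-1}^0\frac{(K_p-H_p)^3}{H_p^2K_p^2}\,dp=0.$$
   Context: Fix $\alpha\in(0,1)$, $\rho\in C^{2+\alpha}([-1,0])$ with $\rho>0$, $\rho_p\le0$, $H\in C^{3+\alpha}([-1,0])$ with $H(-1)=0$, $H(0)=1$, $H_p>0$, and $F>0$. With $R=\mathbb R\times(-1,0)$, $T=\{p=0\}$, $B=\{p=-1\}$, the height equation for $h$ is $\big(-\frac{1+h_q^2}{2h_p^2}+\frac1{2H_p^2}\big)_p+\big(\frac{h_q}{h_p}\big)_q-\frac1{F^2}\rho_p(h-H)=0$ in $R$, $\frac{1+h_q^2}{2h_p^2}-\frac1{2H_p^2}+\frac1{F^2}\rho(h-1)=0$ on $T$, $h=0$ on $B$. The flow force of a $q$-independent $h=K(p)$ is $\mathscr S(K)=\int_{-1}^0\Big[\frac1{2K_p^2}+\frac1{2H_p^2}-\frac1{F^2}\rho(K-H)-\frac1{F^2}\int_0^p\rho H_p\,dp'\Big]K_p\,dp$. *)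

theory Defs
  imports "HOL-Analysis.Analysis"
begin

abbreviation I01 :: "real set" where "I01 \<equiv> {-1..0}"

definition dp :: "(real \<Rightarrow> real) \<Rightarrow> real \<Rightarrow> real" where
  "dp f p = vector_derivative f (at p within I01)"

definition Ck :: "nat \<Rightarrow> (real \<Rightarrow> real) \<Rightarrow> bool" where
  "Ck k f \<longleftrightarrow> (\<exists>D :: nat \<Rightarrow> real \<Rightarrow> real.
      (\<forall>x\<in>I01. D 0 x = f x) \<and>
      (\<forall>j<k. \<forall>x\<in>I01. (D j has_real_derivative D (Suc j) x) (at x within I01)) \<and>
      continuous_on I01 (D k))"

definition Ck_alpha :: "nat \<Rightarrow> real \<Rightarrow> (real \<Rightarrow> real) \<Rightarrow> bool" where
  "Ck_alpha k \<alpha> f \<longleftrightarrow> (\<exists>D :: nat \<Rightarrow> real \<Rightarrow> real.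
      (\<forall>x\<in>I01. D 0 x = f x) \<and>
      (\<forall>j<k. \<forall>x\<in>I01. (D j has_real_derivative D (Suc j) x) (at x within I01)) \<and>
      continuous_on I01 (D k) \<and>
      (\<exists>C. \<forall>x\<in>I01. \<forall>y\<in>I01. \<bar>D k x - D k y\<bar> \<le> C * \<bar>x - y\<bar> powr \<alpha>))"

definition hq :: "(real \<times> real \<Rightarrow> real) \<Rightarrow> real \<Rightarrow> real \<Rightarrow> real" where
  "hq h q p = vector_derivative (\<lambda>s. h (s, p)) (at q)"

definition hp :: "(real \<times> real \<Rightarrow> real) \<Rightarrow> real \<Rightarrow> real \<Rightarrow> real" where
  "hp h q p = vector_derivative (\<lambda>s. h (q, s)) (at p within I01)"

text \<open>The height equation (classical sense): PDE in R, Bernoulli condition on T, h = 0 on B.\<close>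
definition height_eq :: "(real \<Rightarrow> real) \<Rightarrow> (real \<Rightarrow> real) \<Rightarrow> real \<Rightarrow> (real \<times> real \<Rightarrow> real) \<Rightarrow> bool" where
  "height_eq \<rho> H F h \<longleftrightarrow>
     (\<forall>q p. -1 < p \<and> p < 0 \<longrightarrow>
        vector_derivative (\<lambda>s. - (1 + (hq h q s)\<^sup>2) / (2 * (hp h q s)\<^sup>2) + 1 / (2 * (dp H s)\<^sup>2)) (at p)
        + vector_derivative (\<lambda>s. hq h s p / hp h s p) (at q)
        - 1 / F\<^sup>2 * dp \<rho> p * (h (q, p) - H p) = 0) \<and>
     (\<forall>q. (1 + (hq h q 0)\<^sup>2) / (2 * (hp h q 0)\<^sup>2) - 1 / (2 * (dp H 0)\<^sup>2)
          + 1 / F\<^sup>2 * \<rho> 0 * (h (q, 0) - 1) = 0) \<and>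
     (\<forall>q. h (q, -1) = 0)"

text \<open>Flow force of a q-independent height function K; note int_0^p = - int_p^0 for p \<le> 0.\<close>
definition flow_force :: "(real \<Rightarrow> real) \<Rightarrow> (real \<Rightarrow> real) \<Rightarrow> real \<Rightarrow> (real \<Rightarrow> real) \<Rightarrow> real" where
  "flow_force \<rho> H F K = integral I01 (\<lambda>p.
      (1 / (2 * (dp K p)\<^sup>2) + 1 / (2 * (dp H p)\<^sup>2) - 1 / F\<^sup>2 * \<rho> p * (K p - H p)
       - 1 / F\<^sup>2 * (- integral {p..0} (\<lambda>s. \<rho> s * dp H s))) * dp K p)"

end

theory Submission
  imports Defs
begin

text \<open>
  For a laminar height function \<open>h(q,p) = K(p)\<close> the height equation is an ODE in \<open>p\<close>:
  with \<open>\<Psi> = 1/(2 H\<^sub>p\<^sup>2) - 1/(2 K\<^sub>p\<^sup>2)\<close> it reads \<open>\<Psi>' = \<rho>\<^sub>p (K - H) / F\<^sup>2\<close>.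
  Since \<open>\<rho>\<^sub>p (K - H) = (\<rho> (K - H))' - \<rho> (K\<^sub>p - H\<^sub>p)\<close>, it integrates to the first integral
  \<open>F\<^sup>2 \<Psi>(p) = \<rho>(p) (K(p) - H(p)) + \<integral>\<^sub>p\<^sup>0 \<rho> (K\<^sub>p - H\<^sub>p)\<close>, the constant being fixed by the
  Bernoulli condition on the top.  Inserting it into the flow force, the integrand for \<open>K\<close>
  minus the integrand for \<open>H\<close> equals \<open>(K\<^sub>p - H\<^sub>p)\<^sup>3 / (4 H\<^sub>p\<^sup>2 K\<^sub>p\<^sup>2)\<close> plus the derivative
  of \<open>(M + N/2) (K - H) / F\<^sup>2\<close>, where \<open>M\<close> and \<open>N\<close> are the integrals over \<open>[p,0]\<close> of
  \<open>\<rho> H\<^sub>p\<close> and \<open>\<rho> (K\<^sub>p - H\<^sub>p)\<close>.  This exact derivative integrates to zero, as \<open>M\<close> and \<open>N\<close>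
  vanish at the top and \<open>K = H\<close> on the bed.
\<close>

lemma dp_eqI:
  assumes "(f has_real_derivative f') (at x within I01)" and "x \<in> I01"
  shows "dp f x = f'"
  using assms vector_derivative_within_closed_interval[of "-1" 0 x f f']
  by (simp add: dp_def has_real_derivative_iff_has_vector_derivative)

lemma Ck_Suc_has_derivative:
  assumes "Ck (Suc k) f" and "x \<in> I01"
  shows "(f has_real_derivative dp f x) (at x within I01)"
proof -
  obtain D where D0: "\<forall>x\<in>I01. D 0 x = f x"
    and Dd: "\<forall>j<Suc k. \<forall>x\<in>I01. (D j has_real_derivative D (Suc j) x) (at x within I01)"
    using assms unfolding Ck_def by blast
  have "(D 0 has_real_derivative D 1 x) (at x within I01)"
    using Dd assms(2) by simp
  then have "(f has_real_derivative D 1 x) (at x within I01)"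
    by (rule has_field_derivative_transform_within[OF _ zero_less_one]) (use D0 assms(2) in auto)
  with assms(2) show ?thesis by (simp add: dp_eqI)
qed

lemma Ck_imp_continuous_on:
  assumes "Ck k f"
  shows "continuous_on I01 f"
proof (cases k)
  case 0
  with assms obtain D where "\<forall>x\<in>I01. D 0 x = f x" "continuous_on I01 (D 0)"
    unfolding Ck_def by auto
  then show ?thesis using continuous_on_eq by blast
next
  case (Suc j)
  with assms show ?thesis by (auto intro: DERIV_continuous_on Ck_Suc_has_derivative)
qed

lemma Ck_Suc_imp_Ck:
  assumes "Ck (Suc k) f"
  shows "Ck k f"
proof -
  obtain D where "\<forall>x\<in>I01. D 0 x = f x"
    and Dd: "\<forall>j<Suc k. \<forall>x\<in>I01. (D j has_real_derivative D (Suc j) x) (at x within I01)"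
    using assms unfolding Ck_def by blast
  moreover have "continuous_on I01 (D k)"
    using Dd by (auto intro: DERIV_continuous_on)
  ultimately show ?thesis unfolding Ck_def using Dd by auto
qed

lemma Ck_Suc_dp:
  assumes "Ck (Suc k) f"
  shows "Ck k (dp f)"
proof -
  obtain D where D0: "\<forall>x\<in>I01. D 0 x = f x"
    and Dd: "\<forall>j<Suc k. \<forall>x\<in>I01. (D j has_real_derivative D (Suc j) x) (at x within I01)"
    and "continuous_on I01 (D (Suc k))"
    using assms unfolding Ck_def by blast
  moreover have "D 1 x = dp f x" if "x \<in> I01" for x
  proof -
    have "(D 0 has_real_derivative D 1 x) (at x within I01)"
      using Dd that by simp
    then have "(f has_real_derivative D 1 x) (at x within I01)"
      by (rule has_field_derivative_transform_within[OF _ zero_less_one]) (use D0 that in auto)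
    with that show ?thesis by (simp add: dp_eqI)
  qed
  ultimately show ?thesis
    unfolding Ck_def by (intro exI[of _ "\<lambda>j. D (Suc j)"]) auto
qed

lemma Ck_alpha_imp_Ck: "Ck_alpha k \<alpha> f \<Longrightarrow> Ck k f"
  unfolding Ck_alpha_def Ck_def by blast

lemma Ck_Suc_has_derivative_at:
  assumes "Ck (Suc k) f" and "-1 < p" and "p < 0"
  shows "(f has_real_derivative dp f p) (at p)"
  using Ck_Suc_has_derivative[OF assms(1), of p] assms(2,3) at_within_interior[of p I01]
  by simp

lemma has_real_derivative_half_inverse_square:
  fixes f :: "real \<Rightarrow> real"
  assumes "(f has_real_derivative f') (at x within S)" and "f x \<noteq> 0"
  shows "((\<lambda>s. 1 / (2 * (f s)\<^sup>2)) has_real_derivative - f' / f x ^ 3) (at x within S)"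
  using assms
  by (auto intro!: derivative_eq_intros simp: field_simps power2_eq_square power3_eq_cube)

lemma hq_laminar [simp]: "hq (\<lambda>(q, p). K p) q p = 0"
  unfolding hq_def by simp

lemma hp_laminar [simp]: "hp (\<lambda>(q, p). K p) q p = dp K p"
  unfolding hp_def dp_def by simp

lemma height_eq_laminarD:
  assumes "height_eq \<rho> H F (\<lambda>(q, p). K p)"
  shows "\<And>p. -1 < p \<Longrightarrow> p < 0 \<Longrightarrow>
           vector_derivative (\<lambda>s. 1/(2*(dp H s)\<^sup>2) - 1/(2*(dp K s)\<^sup>2)) (at p)
             = dp \<rho> p * (K p - H p) / F\<^sup>2"
    and "1/(2*(dp H 0)\<^sup>2) - 1/(2*(dp K 0)\<^sup>2) = \<rho> 0 * (K 0 - 1) / F\<^sup>2"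
    and "K (-1) = 0"
proof -
  have \<Psi>: "(\<lambda>s. - (1 + (hq (\<lambda>(q, p). K p) 0 s)\<^sup>2) / (2 * (hp (\<lambda>(q, p). K p) 0 s)\<^sup>2)
             + 1 / (2 * (dp H s)\<^sup>2)) = (\<lambda>s. 1/(2*(dp H s)\<^sup>2) - 1/(2*(dp K s)\<^sup>2))"
    by (simp add: fun_eq_iff)
  show "vector_derivative (\<lambda>s. 1/(2*(dp H s)\<^sup>2) - 1/(2*(dp K s)\<^sup>2)) (at p)
          = dp \<rho> p * (K p - H p) / F\<^sup>2" if "-1 < p" "p < 0" for p
    using assms that unfolding height_eq_def \<Psi>[symmetric] by fastforce
  show "1/(2*(dp H 0)\<^sup>2) - 1/(2*(dp K 0)\<^sup>2) = \<rho> 0 * (K 0 - 1) / F\<^sup>2"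
    using assms unfolding height_eq_def by (simp add: field_simps)
  show "K (-1) = 0"
    using assms unfolding height_eq_def by simp
qed

lemma laminar_first_integral:
  assumes K: "Ck 2 K" and H: "Ck 2 H" and \<rho>: "Ck 1 \<rho>"
    and K_nz: "\<forall>p\<in>I01. dp K p \<noteq> 0" and H_nz: "\<forall>p\<in>I01. dp H p \<noteq> 0" and "H 0 = 1"
    and height: "height_eq \<rho> H F (\<lambda>(q, p). K p)"
    and "p \<in> I01"
  shows "1/(2*(dp H p)\<^sup>2) - 1/(2*(dp K p)\<^sup>2)
           = (\<rho> p * (K p - H p) + integral {p..0} (\<lambda>s. \<rho> s * (dp K s - dp H s))) / F\<^sup>2"
proof -
  define \<Psi> where "\<Psi> = (\<lambda>s. 1/(2*(dp H s)\<^sup>2) - 1/(2*(dp K s)\<^sup>2))"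
  define g where "g = (\<lambda>s. \<rho> s * (dp K s - dp H s))"
  define c where "c = 1 / F\<^sup>2"
  define G where "G = (\<lambda>s. \<Psi> s - c * (\<rho> s * (K s - H s) + integral {s..0} g))"
  have K1: "Ck 1 (dp K)" and H1: "Ck 1 (dp H)"
    using Ck_Suc_dp[of 1 K] Ck_Suc_dp[of 1 H] K H by (simp_all add: numeral_2_eq_2)
  have K1c: "continuous_on I01 (dp K)" and H1c: "continuous_on I01 (dp H)"
    using K1 H1 by (simp_all add: Ck_imp_continuous_on)
  have g_cont: "continuous_on I01 g"
    unfolding g_def by (intro continuous_intros Ck_imp_continuous_on[OF \<rho>] K1c H1c)
  have G_cont: "continuous_on I01 G"
  proof -
    have "continuous_on I01 (\<lambda>s. integral {s..0} g)"
      by (rule DERIV_continuous_on[OF integral_has_real_derivative'[OF g_cont]])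
    then show ?thesis
      unfolding G_def \<Psi>_def using K_nz H_nz
      by (intro continuous_intros K1c H1c Ck_imp_continuous_on[OF \<rho>]
            Ck_imp_continuous_on[OF K] Ck_imp_continuous_on[OF H]) auto
  qed
  have G_deriv: "(G has_real_derivative 0) (at x)" if "-1 < x" "x < 0" for x
  proof -
    have x: "x \<in> I01" using that by simp
    have "(dp K has_real_derivative dp (dp K) x) (at x)" "(dp H has_real_derivative dp (dp H) x) (at x)"
      using K1 H1 that by (simp_all add: Ck_Suc_has_derivative_at)
    then have "(\<Psi> has_real_derivative - dp (dp H) x / dp H x ^ 3 - - dp (dp K) x / dp K x ^ 3) (at x)"
      unfolding \<Psi>_def using K_nz H_nz x
      by (intro DERIV_diff has_real_derivative_half_inverse_square) auto
    then have "(\<Psi> has_real_derivative vector_derivative \<Psi> (at x)) (at x)"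
      by (simp add: has_real_derivative_iff_has_vector_derivative vector_derivative_at)
    then have d\<Psi>: "(\<Psi> has_real_derivative c * (dp \<rho> x * (K x - H x))) (at x)"
      using height_eq_laminarD(1)[OF height that] by (simp add: \<Psi>_def c_def)
    have dN: "((\<lambda>s. integral {s..0} g) has_real_derivative - g x) (at x)"
      using integral_has_real_derivative'[OF g_cont x] that at_within_interior[of x I01] by simp
    have "(\<rho> has_real_derivative dp \<rho> x) (at x)" "(K has_real_derivative dp K x) (at x)"
      "(H has_real_derivative dp H x) (at x)"
      using \<rho> K H that by (simp_all add: Ck_Suc_has_derivative_at numeral_2_eq_2)
    then show ?thesis
      unfolding G_def using d\<Psi> dN
      by (auto intro!: derivative_eq_intros simp: g_def algebra_simps)
  qed
  \<comment> \<open>\<open>G\<close> is constant by the interior equation, and zero by the Bernoulli condition.\<close>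
  have G0: "G 0 = 0"
    using height_eq_laminarD(2)[OF height] \<open>H 0 = 1\<close> by (simp add: G_def \<Psi>_def c_def)
  have G_zero: "G s = 0" if "s \<in> I01" for s
  proof (cases "s = 0")
    case False
    with that have "s < 0" by simp
    have "G 0 = G s"
      by (rule DERIV_isconst_end[OF \<open>s < 0\<close> continuous_on_subset[OF G_cont]])
         (use that G_deriv in auto)
    with G0 show ?thesis by simp
  qed (simp add: G0)
  show ?thesis
    using G_zero[OF \<open>p \<in> I01\<close>] by (simp add: G_def \<Psi>_def g_def c_def)
qed

lemma flow_force_integrand_identity:
  fixes a b c r u M N :: real
  assumes "a \<noteq> 0" and "b \<noteq> 0"
    and "1/(2*b\<^sup>2) - 1/(2*a\<^sup>2) = c * (r*u + N)"
  shows "(1/(2*a\<^sup>2) + 1/(2*b\<^sup>2) - c*r*u + c*M) * a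
       = (1/b\<^sup>2 + c*M) * b + (a - b)^3 / (b\<^sup>2*a\<^sup>2) / 4
         + c * ((- r*b - r*(a - b)/2) * u + (M + N/2) * (a - b))"
proof -
  have cN: "c * N = 1/(2*b\<^sup>2) - 1/(2*a\<^sup>2) - c*r*u"
    using assms(3) by (simp add: algebra_simps)
  have "(1/b\<^sup>2 + c*M) * b + (a - b)^3 / (b\<^sup>2*a\<^sup>2) / 4
         + c * ((- r*b - r*(a - b)/2) * u + (M + N/2) * (a - b))
      = (1/b\<^sup>2 + c*M) * b + (a - b)^3 / (b\<^sup>2*a\<^sup>2) / 4
         + c * ((- r*b - r*(a - b)/2) * u + M * (a - b)) + (c * N) * (a - b) / 2"
    by (simp add: algebra_simps)
  also have "\<dots> = (1/(2*a\<^sup>2) + 1/(2*b\<^sup>2) - c*r*u + c*M) * a"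
    unfolding cN using assms(1,2) by (simp add: field_simps power2_eq_square power3_eq_cube)
  finally show ?thesis ..
qed

lemma flow_force_difference:
  assumes K: "Ck 1 K" and H: "Ck 1 H" and \<rho>: "continuous_on I01 \<rho>"
    and K_nz: "\<forall>p\<in>I01. dp K p \<noteq> 0" and H_nz: "\<forall>p\<in>I01. dp H p \<noteq> 0"
    and "K (-1) = H (-1)"
    and first_integral: "\<And>p. p \<in> I01 \<Longrightarrow> 1/(2*(dp H p)\<^sup>2) - 1/(2*(dp K p)\<^sup>2)
           = (\<rho> p * (K p - H p) + integral {p..0} (\<lambda>s. \<rho> s * (dp K s - dp H s))) / F\<^sup>2"
  shows "flow_force \<rho> H F K = flow_force \<rho> H F H
           + integral I01 (\<lambda>p. (dp K p - dp H p) ^ 3 / ((dp H p)\<^sup>2 * (dp K p)\<^sup>2)) / 4"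
proof -
  define c where "c = 1 / F\<^sup>2"
  define m where "m = (\<lambda>s. \<rho> s * dp H s)"
  define g where "g = (\<lambda>s. \<rho> s * (dp K s - dp H s))"
  define M where "M = (\<lambda>p. integral {p..0} m)"
  define N where "N = (\<lambda>p. integral {p..0} g)"
  define P where "P = (\<lambda>p. c * (M p + N p / 2) * (K p - H p))"
  define P' where "P' = (\<lambda>p. c * ((- m p - g p / 2) * (K p - H p) + (M p + N p / 2) * (dp K p - dp H p)))"
  define t where "t = (\<lambda>p. (dp K p - dp H p) ^ 3 / ((dp H p)\<^sup>2 * (dp K p)\<^sup>2))"
  define fK where "fK = (\<lambda>p. (1 / (2 * (dp K p)\<^sup>2) + 1 / (2 * (dp H p)\<^sup>2) - 1 / F\<^sup>2 * \<rho> p * (K p - H p)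
       - 1 / F\<^sup>2 * (- integral {p..0} (\<lambda>s. \<rho> s * dp H s))) * dp K p)"
  define fH where "fH = (\<lambda>p. (1 / (2 * (dp H p)\<^sup>2) + 1 / (2 * (dp H p)\<^sup>2) - 1 / F\<^sup>2 * \<rho> p * (H p - H p)
       - 1 / F\<^sup>2 * (- integral {p..0} (\<lambda>s. \<rho> s * dp H s))) * dp H p)"
  have K1c: "continuous_on I01 (dp K)" and H1c: "continuous_on I01 (dp H)"
    using Ck_Suc_dp[of 0 K] Ck_Suc_dp[of 0 H] K H by (auto intro: Ck_imp_continuous_on)
  have m_cont: "continuous_on I01 m" and g_cont: "continuous_on I01 g"
    unfolding m_def g_def by (intro continuous_intros \<rho> K1c H1c)+
  have dM: "(M has_real_derivative - m p) (at p within I01)"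
   and dN: "(N has_real_derivative - g p) (at p within I01)" if "p \<in> I01" for p
    unfolding M_def N_def using that m_cont g_cont by (simp_all add: integral_has_real_derivative')
  have dP: "(P has_real_derivative P' p) (at p within I01)" if "p \<in> I01" for p
    unfolding P_def P'_def using dM[OF that] dN[OF that]
      Ck_Suc_has_derivative[of 0 K p] Ck_Suc_has_derivative[of 0 H p] K H that
    by (auto intro!: derivative_eq_intros simp: field_simps)
  have "(P' has_integral P 0 - P (-1)) I01"
    by (rule fundamental_theorem_of_calculus)
       (auto simp: has_real_derivative_iff_has_vector_derivative[symmetric] intro: dP)
  moreover have "P 0 = 0" "P (-1) = 0"
    using \<open>K (-1) = H (-1)\<close> by (simp_all add: P_def M_def N_def)
  ultimately have P'_int: "(P' has_integral 0) I01" by simp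
  have fH_eq: "fH p = (1 / (dp H p)\<^sup>2 + c * M p) * dp H p" for p
    by (simp add: fH_def M_def m_def c_def)
  have fK_eq: "fK p = fH p + t p / 4 + P' p" if "p \<in> I01" for p
  proof -
    have "1/(2*(dp H p)\<^sup>2) - 1/(2*(dp K p)\<^sup>2) = c * (\<rho> p * (K p - H p) + N p)"
      using first_integral[OF that] by (simp add: c_def N_def g_def)
    then have "(1/(2*(dp K p)\<^sup>2) + 1/(2*(dp H p)\<^sup>2) - c * \<rho> p * (K p - H p) + c * M p) * dp K p
        = (1 / (dp H p)\<^sup>2 + c * M p) * dp H p + t p / 4 + P' p"
      using flow_force_integrand_identity K_nz H_nz that
      by (simp add: t_def P'_def m_def g_def)
    then show ?thesis
      by (simp add: fK_def fH_eq M_def m_def c_def)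
  qed
  have "continuous_on I01 M"
    using dM by (rule DERIV_continuous_on)
  then have "continuous_on I01 fH"
    unfolding fH_eq using H_nz by (intro continuous_intros H1c) auto
  moreover have "continuous_on I01 t"
    unfolding t_def using H_nz K_nz by (intro continuous_intros H1c K1c) auto
  ultimately have "((\<lambda>p. fH p + t p / 4 + P' p) has_integral integral I01 fH + integral I01 t / 4 + 0) I01"
    by (intro has_integral_add has_integral_divide P'_int integrable_integral
        integrable_continuous_interval)
  then have "(fK has_integral integral I01 fH + integral I01 t / 4) I01"
    by (subst has_integral_cong[OF fK_eq]) auto
  then show ?thesis
    unfolding flow_force_def fK_def[symmetric] fH_def[symmetric] t_def[symmetric]
    by (simp add: integral_unique)
qed

theorem lemma4p9:
  fixes \<alpha> F :: real and \<rho> H K :: "real \<Rightarrow> real"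
  assumes "0 < \<alpha>" and "\<alpha> < 1"
    and "Ck_alpha 2 \<alpha> \<rho>" and "\<forall>p\<in>{-1..0}. \<rho> p > 0" and "\<forall>p\<in>{-1..0}. dp \<rho> p \<le> 0"
    and "Ck_alpha 3 \<alpha> H" and "H (-1) = 0" and "H 0 = 1" and "\<forall>p\<in>{-1..0}. dp H p > 0"
    and "F > 0"
    and "Ck 2 K" and "\<forall>p\<in>{-1..0}. dp K p > 0"
    and "height_eq \<rho> H F (\<lambda>(q, p). K p)"
    and "flow_force \<rho> H F K = flow_force \<rho> H F H"
  shows "integral {-1..0} (\<lambda>p. (dp K p - dp H p) ^ 3 / ((dp H p)\<^sup>2 * (dp K p)\<^sup>2)) = 0"
proof -
  have H: "Ck 2 H"
    using Ck_Suc_imp_Ck[of 2 H] Ck_alpha_imp_Ck[OF \<open>Ck_alpha 3 \<alpha> H\<close>] by simp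
  have \<rho>: "Ck 1 \<rho>"
    using Ck_Suc_imp_Ck[of 1 \<rho>] Ck_alpha_imp_Ck[OF \<open>Ck_alpha 2 \<alpha> \<rho>\<close>]
    by (simp add: numeral_2_eq_2)
  have K1: "Ck 1 K" and H1: "Ck 1 H"
    using Ck_Suc_imp_Ck[of 1 K] Ck_Suc_imp_Ck[of 1 H] \<open>Ck 2 K\<close> H
    by (simp_all add: numeral_2_eq_2)
  have K_nz: "\<forall>p\<in>I01. dp K p \<noteq> 0" and H_nz: "\<forall>p\<in>I01. dp H p \<noteq> 0"
    using \<open>\<forall>p\<in>{-1..0}. dp K p > 0\<close> \<open>\<forall>p\<in>{-1..0}. dp H p > 0\<close> by fastforce+
  have "K (-1) = H (-1)"
    using height_eq_laminarD(3)[OF \<open>height_eq \<rho> H F (\<lambda>(q, p). K p)\<close>] \<open>H (-1) = 0\<close> by simp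
  moreover note laminar_first_integral[OF \<open>Ck 2 K\<close> H \<rho> K_nz H_nz \<open>H 0 = 1\<close>
      \<open>height_eq \<rho> H F (\<lambda>(q, p). K p)\<close>]
  ultimately have "flow_force \<rho> H F K = flow_force \<rho> H F H
      + integral I01 (\<lambda>p. (dp K p - dp H p) ^ 3 / ((dp H p)\<^sup>2 * (dp K p)\<^sup>2)) / 4"
    by (intro flow_force_difference K1 H1 K_nz H_nz Ck_imp_continuous_on[OF \<rho>])
  with \<open>flow_force \<rho> H F K = flow_force \<rho> H F H\<close> show ?thesis by simp
qed

end
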